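(* Let $\alpha\in\mathbb R$, $\gamma\in\mathbb R\setminus\{0\}$, and let $K_0$ be the operator on $\ell^2(\mathbb Z)$ given by $(K_0f)(n)=\alpha f(n-1)+\alpha f(n+1)+\gamma n f(n)$. Let $\delta_n$ be the standard basis vector at $n$. Then for all $t\in\mathbb R$ and $x,n\in\mathbb Z$, $$\big[e^{-iK_0t}\delta_n\big](x)=J_{n-x}\!\Big(\tfrac{4\alpha}{\gamma}\sin\big(\tfrac{\gamma t}{2}\big)\Big)\exp\Big[-i\Big(\tfrac{\gamma t-\pi}{2}\,x+\tfrac{\gamma t+\pi}{2}\,n\Big)\Big],$$ where $J_k$ is the Bessel function of the first kind of integer order $k$.
   Context: $K_0$ is self-adjoint on the domain $\{f\in\ell^2(\mathbb Z):(nf(n))_n\in\ell^2(\mathbb Z)\}$. In the paper, $K_0$ is the infinite-volume matrix of $P(0)VP(0)$ for a uniform field $\vec B$ in the ground-state basis $|n,U\rangle$. Here $\alpha=\sqrt{B_1^2+B_2^2}\,a$, with $a$ the constant from the magnetization-profile lemma, and $\gamma=B_3$. *)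

theory Defs
  imports "HOL-Analysis.Analysis"
begin

type_synonym seqZ = "int \<Rightarrow> complex"

definition ell2Z :: "seqZ set" where
  "ell2Z = {f. (\<lambda>n. (cmod (f n))\<^sup>2) summable_on UNIV}"

definition l2norm :: "seqZ \<Rightarrow> real" where
  "l2norm f = sqrt (\<Sum>\<^sub>\<infinity>n. (cmod (f n))\<^sup>2)"

definition delta :: "int \<Rightarrow> seqZ" where
  "delta n = (\<lambda>x. if x = n then 1 else 0)"

text \<open>The operator K0 (acting pointwise) and its self-adjointness domain.\<close>
definition K0 :: "real \<Rightarrow> real \<Rightarrow> seqZ \<Rightarrow> seqZ" where
  "K0 \<alpha> \<gamma> f = (\<lambda>n. complex_of_real \<alpha> * f (n - 1) + complex_of_real \<alpha> * f (n + 1)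
                      + complex_of_real (\<gamma> * real_of_int n) * f n)"

definition domK0 :: "seqZ set" where
  "domK0 = {f \<in> ell2Z. (\<lambda>n. of_int n * f n) \<in> ell2Z}"

text \<open>U is the strongly continuous one-parameter unitary group on l2(Z) whose
  generator is -i K0 with domain domK0, i.e. U t = exp(-i K0 t) (Stone's theorem).\<close>
definition is_unitary_group_of_K0 :: "real \<Rightarrow> real \<Rightarrow> (real \<Rightarrow> seqZ \<Rightarrow> seqZ) \<Rightarrow> bool" where
  "is_unitary_group_of_K0 \<alpha> \<gamma> U \<longleftrightarrow>
     (\<forall>t. U t ` ell2Z = ell2Z) \<and>
     (\<forall>t. \<forall>f\<in>ell2Z. \<forall>g\<in>ell2Z. \<forall>a b. U t (\<lambda>n. a * f n + b * g n) = (\<lambda>n. a * U t f n + b * U t g n)) \<and>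
     (\<forall>t. \<forall>f\<in>ell2Z. l2norm (U t f) = l2norm f) \<and>
     (\<forall>f\<in>ell2Z. U 0 f = f) \<and>
     (\<forall>s t. \<forall>f\<in>ell2Z. U (s + t) f = U s (U t f)) \<and>
     (\<forall>f\<in>ell2Z. ((\<lambda>h. l2norm (U h f - f)) \<longlongrightarrow> 0) (at 0)) \<and>
     (\<forall>f\<in>ell2Z. \<forall>g\<in>ell2Z.
        ((\<lambda>h. l2norm ((\<lambda>n. (U h f n - f n) / complex_of_real h) - g)) \<longlongrightarrow> 0) (at 0)
        \<longleftrightarrow> (f \<in> domK0 \<and> g = (\<lambda>n. - \<i> * K0 \<alpha> \<gamma> f n)))"

definition besselJ :: "int \<Rightarrow> real \<Rightarrow> real" where
  "besselJ k z =
     (let m = nat \<bar>k\<bar>;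
          Jm = (\<Sum>j. (-1) ^ j / (fact j * fact (j + m)) * (z / 2) ^ (2 * j + m))
      in if k \<ge> 0 then Jm else (-1) ^ m * Jm)"

end

theory Submission
  imports Defs
begin

text \<open>The amplitudes \<open>c y s = U s (delta n) y\<close> are bounded by 1 and solve the lattice
  Schroedinger equation \<open>c' = -\<i> K0 c\<close>. The Bessel kernel \<open>W \<tau> x y\<close> of the theorem solves
  the same equation (Bessel's derivative formula and three-term recurrence) and decays
  superexponentially in \<open>|y - x|\<close>, uniformly in \<open>\<tau>\<close>. Since \<open>K0\<close> is a real symmetric matrix,
  the bilinear pairing of the backward solution \<open>w y s = W (t - s) x y\<close> with \<open>c\<close> is conserved
  up to a discrete current. Summed over the window \<open>|y - x| \<le> N\<close> it equals \<open>c x t\<close> at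
  \<open>s = t\<close> and \<open>W t x n\<close> at \<open>s = 0\<close>, and its derivative is a boundary current of size
  \<open>O(\<beta> N)\<close> with \<open>\<beta> N \<longrightarrow> 0\<close>; letting \<open>N \<rightarrow> \<infinity>\<close> gives \<open>c x t = W t x n\<close>.\<close>

section \<open>Bessel functions of integer order\<close>

definition bessel_coeff :: "nat \<Rightarrow> nat \<Rightarrow> real" where
  "bessel_coeff m j = (-1) ^ j / (fact j * fact (j + m))"

text \<open>Factoring \<open>J\<^sub>m z\<close> as \<open>(z/2)^m\<close> times an entire power series in \<open>(z/2)^2\<close> makes
  the derivative formula and the three-term recurrence routine.\<close>
definition bessel_reduced :: "nat \<Rightarrow> real \<Rightarrow> real" where
  "bessel_reduced m w = (\<Sum>j. bessel_coeff m j * w ^ j)"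

definition besselJ_nat :: "nat \<Rightarrow> real \<Rightarrow> real" where
  "besselJ_nat m z = (z / 2) ^ m * bessel_reduced m ((z / 2)\<^sup>2)"

lemma abs_bessel_coeff_le: "\<bar>bessel_coeff m j\<bar> \<le> inverse (fact j * fact m)"
proof -
  have "fact m \<le> (fact (j + m) :: real)" by (rule fact_mono) simp
  then have "inverse (fact j * fact (j + m)) \<le> (inverse (fact j * fact m) :: real)"
    by (intro le_imp_inverse_le mult_left_mono) auto
  then show ?thesis by (simp add: bessel_coeff_def abs_mult power_abs divide_inverse)
qed

lemma norm_bessel_coeff_power_le:
  "norm (bessel_coeff m j * w ^ j) \<le> inverse (fact j) * \<bar>w\<bar> ^ j / fact m"
proof -
  have "\<bar>bessel_coeff m j\<bar> * \<bar>w\<bar> ^ j \<le> inverse (fact j * fact m) * \<bar>w\<bar> ^ j"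
    by (rule mult_right_mono[OF abs_bessel_coeff_le]) simp
  then show ?thesis by (simp add: abs_mult power_abs divide_inverse mult_ac)
qed

lemma summable_bessel_coeff: "summable (\<lambda>j. bessel_coeff m j * w ^ j)"
  by (rule summable_comparison_test[OF _ summable_divide[OF summable_exp[of "\<bar>w\<bar>"]]])
     (use norm_bessel_coeff_power_le in blast)

lemma abs_bessel_reduced_le: "\<bar>bessel_reduced m w\<bar> \<le> exp \<bar>w\<bar> / fact m"
proof -
  have exp_series: "(\<lambda>j. inverse (fact j) * \<bar>w\<bar> ^ j / fact m) sums (exp \<bar>w\<bar> / fact m)"
  proof -
    have "(\<lambda>j. inverse (fact j) * \<bar>w\<bar> ^ j) sums exp \<bar>w\<bar>"
      using exp_converges[of "\<bar>w\<bar>"] by (simp add: divide_inverse mult.commute)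
    from sums_divide[OF this] show ?thesis .
  qed
  have "norm (bessel_reduced m w) \<le> (\<Sum>j. inverse (fact j) * \<bar>w\<bar> ^ j / fact m)"
    unfolding bessel_reduced_def
    by (rule norm_suminf_le[OF norm_bessel_coeff_power_le sums_summable[OF exp_series]])
  then show ?thesis using exp_series by (simp add: sums_iff)
qed

lemma bessel_coeff_Suc: "bessel_coeff m (Suc j) = - bessel_coeff (Suc m) j / of_nat (Suc j)"
proof -
  have "fact (Suc j) = (of_nat (Suc j) * fact j :: real)" by (rule fact_Suc)
  moreover have "Suc j + m = j + Suc m" by simp
  ultimately show ?thesis
    unfolding bessel_coeff_def by (simp del: fact_Suc of_nat_Suc add: field_simps)
qed

lemma bessel_coeff_eq_Suc: "bessel_coeff m j = of_nat (j + Suc m) * bessel_coeff (Suc m) j"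
proof -
  have "fact (j + Suc m) = (of_nat (j + Suc m) * fact (j + m) :: real)"
    using fact_Suc[of "j + m"] by simp
  then show ?thesis
    unfolding bessel_coeff_def by (simp del: fact_Suc of_nat_Suc add: field_simps)
qed

lemma has_real_derivative_bessel_reduced:
  "(bessel_reduced m has_real_derivative - bessel_reduced (Suc m) w) (at w)"
proof -
  have "diffs (bessel_coeff m) = (\<lambda>j. - bessel_coeff (Suc m) j)"
    by (simp add: fun_eq_iff diffs_def bessel_coeff_Suc del: of_nat_Suc)
  then have "(\<Sum>j. diffs (bessel_coeff m) j * w ^ j) = - bessel_reduced (Suc m) w"
    using suminf_minus[OF summable_bessel_coeff] by (simp add: bessel_reduced_def)
  with termdiffs_strong_converges_everywhere[OF summable_bessel_coeff]
  show ?thesis unfolding bessel_reduced_def by metis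
qed

lemma bessel_reduced_recurrence:
  "bessel_reduced m w = of_nat (Suc m) * bessel_reduced (Suc m) w - w * bessel_reduced (Suc (Suc m)) w"
proof -
  let ?c = "bessel_coeff (Suc m)"
  have shifted: "(\<lambda>j. of_nat j * ?c j * w ^ j) sums (- w * bessel_reduced (Suc (Suc m)) w)"
  proof -
    have "(\<lambda>j. - w * (bessel_coeff (Suc (Suc m)) j * w ^ j)) sums (- w * bessel_reduced (Suc (Suc m)) w)"
      unfolding bessel_reduced_def by (intro sums_mult summable_sums summable_bessel_coeff)
    moreover have "of_nat (Suc j) * ?c (Suc j) * w ^ Suc j = - w * (bessel_coeff (Suc (Suc m)) j * w ^ j)" for j
      by (simp add: bessel_coeff_Suc del: of_nat_Suc)
    ultimately show ?thesis
      using sums_Suc_iff[of "\<lambda>j. of_nat j * ?c j * w ^ j"] by simp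
  qed
  have "(\<lambda>j. of_nat (Suc m) * (?c j * w ^ j)) sums (of_nat (Suc m) * bessel_reduced (Suc m) w)"
    unfolding bessel_reduced_def by (intro sums_mult summable_sums summable_bessel_coeff)
  from sums_add[OF this shifted]
  have "(\<lambda>j. bessel_coeff m j * w ^ j) sums
      (of_nat (Suc m) * bessel_reduced (Suc m) w - w * bessel_reduced (Suc (Suc m)) w)"
    by (simp add: bessel_coeff_eq_Suc[of m] algebra_simps)
  then show ?thesis by (simp add: bessel_reduced_def sums_iff)
qed

lemma has_real_derivative_besselJ_nat:
  "(besselJ_nat m has_real_derivative
     of_nat m / 2 * (z / 2) ^ (m - 1) * bessel_reduced m ((z / 2)\<^sup>2)
     - (z / 2) ^ Suc m * bessel_reduced (Suc m) ((z / 2)\<^sup>2)) (at z)"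
proof -
  have "((\<lambda>z. bessel_reduced m ((z / 2)\<^sup>2)) has_real_derivative
      - bessel_reduced (Suc m) ((z / 2)\<^sup>2) * (z / 2)) (at z)"
    by (rule DERIV_chain2[OF has_real_derivative_bessel_reduced, THEN DERIV_cong])
       (auto intro!: derivative_eq_intros)
  then have "((\<lambda>z. (z / 2) ^ m * bessel_reduced m ((z / 2)\<^sup>2)) has_real_derivative
      of_nat m * (z / 2) ^ (m - 1) * (1 / 2) * bessel_reduced m ((z / 2)\<^sup>2)
      + (z / 2) ^ m * (- bessel_reduced (Suc m) ((z / 2)\<^sup>2) * (z / 2))) (at z)"
    by (auto intro!: derivative_eq_intros)
  then show ?thesis
    unfolding besselJ_nat_def[abs_def] by (rule DERIV_cong) (simp add: algebra_simps power_Suc2)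
qed

lemma has_real_derivative_besselJ_nat_0: "(besselJ_nat 0 has_real_derivative - besselJ_nat 1 z) (at z)"
  using has_real_derivative_besselJ_nat[of 0 z] by (simp add: besselJ_nat_def)

lemma has_real_derivative_besselJ_nat_Suc:
  "(besselJ_nat (Suc m) has_real_derivative (besselJ_nat m z - besselJ_nat (Suc (Suc m)) z) / 2) (at z)"
  by (rule DERIV_cong[OF has_real_derivative_besselJ_nat])
     (simp add: besselJ_nat_def bessel_reduced_recurrence[of m] field_simps power2_eq_square)

lemma besselJ_nat_recurrence:
  "z * (besselJ_nat m z + besselJ_nat (Suc (Suc m)) z) = 2 * of_nat (Suc m) * besselJ_nat (Suc m) z"
  unfolding besselJ_nat_def bessel_reduced_recurrence[of m] by (simp add: algebra_simps power2_eq_square)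

lemma besselJ_nat_series:
  "(\<Sum>j. (-1) ^ j / (fact j * fact (j + m)) * (z / 2) ^ (2 * j + m)) = besselJ_nat m z"
proof -
  have "besselJ_nat m z = (\<Sum>j. (z / 2) ^ m * (bessel_coeff m j * ((z / 2)\<^sup>2) ^ j))"
    unfolding besselJ_nat_def bessel_reduced_def by (rule suminf_mult[symmetric, OF summable_bessel_coeff])
  also have "\<dots> = (\<Sum>j. (-1) ^ j / (fact j * fact (j + m)) * (z / 2) ^ (2 * j + m))"
    by (rule suminf_cong) (simp add: bessel_coeff_def power_add power_mult[symmetric] mult.commute)
  finally show ?thesis ..
qed

lemma besselJ_of_nat: "besselJ (int m) z = besselJ_nat m z"
  unfolding besselJ_def Let_def besselJ_nat_series by simp

lemma besselJ_minus_of_nat: "besselJ (- int m) z = (-1) ^ m * besselJ_nat m z"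
  unfolding besselJ_def Let_def besselJ_nat_series by (cases "m = 0") simp_all

lemma abs_besselJ_le: "\<bar>besselJ k z\<bar> \<le> (\<bar>z\<bar> / 2) ^ nat \<bar>k\<bar> / fact (nat \<bar>k\<bar>) * exp ((z / 2)\<^sup>2)"
proof -
  have "\<bar>besselJ k z\<bar> = \<bar>besselJ_nat (nat \<bar>k\<bar>) z\<bar>"
    unfolding besselJ_def Let_def besselJ_nat_series by (simp add: abs_mult)
  also have "\<dots> = (\<bar>z\<bar> / 2) ^ nat \<bar>k\<bar> * \<bar>bessel_reduced (nat \<bar>k\<bar>) ((z / 2)\<^sup>2)\<bar>"
    by (simp add: besselJ_nat_def abs_mult power_abs)
  also have "\<dots> \<le> (\<bar>z\<bar> / 2) ^ nat \<bar>k\<bar> * (exp ((z / 2)\<^sup>2) / fact (nat \<bar>k\<bar>))"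
    using abs_bessel_reduced_le[of _ "(z / 2)\<^sup>2"] by (intro mult_left_mono) simp_all
  finally show ?thesis by simp
qed

lemma besselJ_at_0: "besselJ k 0 = (if k = 0 then 1 else 0)"
proof -
  have "bessel_reduced m 0 = bessel_coeff m 0" for m
    using powser_zero[of "bessel_coeff m"] by (simp add: bessel_reduced_def)
  then show ?thesis
    by (cases k rule: int_cases4) (auto simp: besselJ_of_nat besselJ_minus_of_nat besselJ_nat_def bessel_coeff_def)
qed

lemma has_real_derivative_besselJ:
  "(besselJ k has_real_derivative (besselJ (k - 1) z - besselJ (k + 1) z) / 2) (at z)"
proof (cases k rule: int_cases3)
  case zero
  then show ?thesis
    using has_real_derivative_besselJ_nat_0[of z] besselJ_minus_of_nat[of 1 z] besselJ_of_nat[of 1 z]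
    by (simp add: besselJ_of_nat[of 0, simplified, abs_def])
next
  case (pos n)
  then obtain m where k: "k = int (Suc m)" by (metis gr0_implies_Suc)
  have "besselJ k = besselJ_nat (Suc m)" by (rule ext) (simp only: k besselJ_of_nat)
  moreover have "k - 1 = int m" "k + 1 = int (Suc (Suc m))" using k by simp_all
  ultimately show ?thesis
    using has_real_derivative_besselJ_nat_Suc[of m z] by (simp only: besselJ_of_nat)
next
  case (neg n)
  then obtain m where k: "k = - int (Suc m)" by (metis gr0_implies_Suc)
  have "k - 1 = - int (Suc (Suc m))" "k + 1 = - int m" using k by simp_all
  moreover have "besselJ k = (\<lambda>z. (-1) ^ Suc m * besselJ_nat (Suc m) z)"
    by (simp add: fun_eq_iff k besselJ_minus_of_nat del: of_nat_Suc)
  ultimately show ?thesis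
    using DERIV_cmult[OF has_real_derivative_besselJ_nat_Suc[of m z], of "(-1) ^ Suc m"]
    by (simp only: besselJ_minus_of_nat) (simp add: algebra_simps)
qed

lemma besselJ_recurrence: "z * (besselJ (k - 1) z + besselJ (k + 1) z) = 2 * of_int k * besselJ k z"
proof (cases k rule: int_cases3)
  case zero
  then show ?thesis using besselJ_minus_of_nat[of 1 z] besselJ_of_nat[of 1 z] by simp
next
  case (pos n)
  then obtain m where k: "k = int (Suc m)" by (metis gr0_implies_Suc)
  have "k - 1 = int m" "k + 1 = int (Suc (Suc m))" using k by simp_all
  then show ?thesis using besselJ_nat_recurrence[of z m] by (simp only: k besselJ_of_nat)
next
  case (neg n)
  then obtain m where k: "k = - int (Suc m)" by (metis gr0_implies_Suc)
  have "k - 1 = - int (Suc (Suc m))" "k + 1 = - int m" using k by simp_all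
  then show ?thesis using arg_cong[OF besselJ_nat_recurrence[of z m], where f = "(*) ((-1) ^ m)"]
    by (simp only: k besselJ_minus_of_nat) (simp add: algebra_simps)
qed


section \<open>The Bessel propagator\<close>

definition bessel_propagator :: "real \<Rightarrow> real \<Rightarrow> real \<Rightarrow> int \<Rightarrow> int \<Rightarrow> complex" where
  "bessel_propagator \<alpha> \<gamma> \<tau> x y =
     complex_of_real (besselJ (y - x) (4 * \<alpha> / \<gamma> * sin (\<gamma> * \<tau> / 2)))
     * exp (- \<i> * complex_of_real ((\<gamma> * \<tau> - pi) / 2 * real_of_int x + (\<gamma> * \<tau> + pi) / 2 * real_of_int y))"

lemma bessel_propagator_at_0: "bessel_propagator \<alpha> \<gamma> 0 x y = (if y = x then 1 else 0)"
  by (auto simp: bessel_propagator_def besselJ_at_0 algebra_simps)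

lemma has_real_derivative_besselJ_sin:
  fixes \<alpha> \<gamma> \<tau> :: real
  assumes "\<gamma> \<noteq> 0"
  defines "z \<equiv> \<lambda>\<tau>. 4 * \<alpha> / \<gamma> * sin (\<gamma> * \<tau> / 2)"
  shows "((\<lambda>\<tau>. besselJ k (z \<tau>)) has_real_derivative
           \<alpha> * cos (\<gamma> * \<tau> / 2) * (besselJ (k - 1) (z \<tau>) - besselJ (k + 1) (z \<tau>))) (at \<tau>)"
proof -
  have "(z has_real_derivative 4 * \<alpha> / \<gamma> * (cos (\<gamma> * \<tau> / 2) * (\<gamma> / 2))) (at \<tau>)"
    unfolding z_def by (auto intro!: derivative_eq_intros)
  from DERIV_chain2[OF has_real_derivative_besselJ this] show ?thesis
    by (rule DERIV_cong) (use assms(1) in \<open>simp add: field_simps\<close>)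
qed

lemma besselJ_sin_recurrence:
  fixes \<alpha> \<gamma> \<tau> :: real
  assumes "\<gamma> \<noteq> 0"
  defines "z \<equiv> 4 * \<alpha> / \<gamma> * sin (\<gamma> * \<tau> / 2)"
  shows "\<alpha> * sin (\<gamma> * \<tau> / 2) * (besselJ (k - 1) z + besselJ (k + 1) z) = \<gamma> / 2 * of_int k * besselJ k z"
proof -
  have "\<alpha> * sin (\<gamma> * \<tau> / 2) * (besselJ (k - 1) z + besselJ (k + 1) z)
      = \<gamma> / 4 * (z * (besselJ (k - 1) z + besselJ (k + 1) z))"
    using assms by simp
  also have "\<dots> = \<gamma> / 2 * of_int k * besselJ k z"
    by (simp add: besselJ_recurrence)
  finally show ?thesis .
qed

lemma bessel_propagator_neighbours:
  fixes \<alpha> \<gamma> \<tau> :: real and x y :: int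
  defines "z \<equiv> 4 * \<alpha> / \<gamma> * sin (\<gamma> * \<tau> / 2)"
    and "E \<equiv> exp (- \<i> * complex_of_real ((\<gamma> * \<tau> - pi) / 2 * real_of_int x + (\<gamma> * \<tau> + pi) / 2 * real_of_int y))"
  shows "bessel_propagator \<alpha> \<gamma> \<tau> x (y - 1) = besselJ (y - x - 1) z * (\<i> * cis (\<gamma> * \<tau> / 2)) * E"
    and "bessel_propagator \<alpha> \<gamma> \<tau> x (y + 1) = besselJ (y - x + 1) z * (- \<i> * cis (- (\<gamma> * \<tau> / 2))) * E"
proof -
  define \<rho> where "\<rho> = (\<lambda>y. (\<gamma> * \<tau> - pi) / 2 * real_of_int x + (\<gamma> * \<tau> + pi) / 2 * real_of_int y)"
  have exp_cis: "exp (- \<i> * complex_of_real r) = cis (- r)" for r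
    by (simp add: cis_conv_exp)
  have propagator: "bessel_propagator \<alpha> \<gamma> \<tau> x y' = besselJ (y' - x) z * cis (- \<rho> y')" for y'
    by (simp only: bessel_propagator_def exp_cis \<rho>_def z_def)
  have E: "E = cis (- \<rho> y)"
    by (simp only: E_def exp_cis \<rho>_def)
  have "- \<rho> (y - 1) = pi / 2 + \<gamma> * \<tau> / 2 + - \<rho> y" "- \<rho> (y + 1) = - (pi / 2) + - (\<gamma> * \<tau> / 2) + - \<rho> y"
    by (simp_all add: \<rho>_def field_simps)
  then show "bessel_propagator \<alpha> \<gamma> \<tau> x (y - 1) = besselJ (y - x - 1) z * (\<i> * cis (\<gamma> * \<tau> / 2)) * E"
    and "bessel_propagator \<alpha> \<gamma> \<tau> x (y + 1) = besselJ (y - x + 1) z * (- \<i> * cis (- (\<gamma> * \<tau> / 2))) * E"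
    unfolding propagator E by (simp_all only: cis_mult[symmetric] cis_pi_half cis_minus_pi_half)
      (simp_all add: algebra_simps)
qed

lemma has_vector_derivative_bessel_propagator:
  assumes "\<gamma> \<noteq> 0"
  shows "((\<lambda>\<tau>. bessel_propagator \<alpha> \<gamma> \<tau> x y) has_vector_derivative
           - \<i> * K0 \<alpha> \<gamma> (bessel_propagator \<alpha> \<gamma> \<tau> x) y) (at \<tau>)"
proof -
  define \<theta> where "\<theta> = \<gamma> * \<tau> / 2"
  define J where "J = (\<lambda>k. besselJ k (4 * \<alpha> / \<gamma> * sin \<theta>))"
  define \<rho>' where "\<rho>' = \<gamma> / 2 * real_of_int x + \<gamma> / 2 * real_of_int y"
  define E where "E = exp (- \<i> * complex_of_real ((\<gamma> * \<tau> - pi) / 2 * real_of_int x + (\<gamma> * \<tau> + pi) / 2 * real_of_int y))"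
  have dJ: "((\<lambda>\<tau>. complex_of_real (besselJ (y - x) (4 * \<alpha> / \<gamma> * sin (\<gamma> * \<tau> / 2)))) has_vector_derivative
      complex_of_real (\<alpha> * cos \<theta> * (J (y - x - 1) - J (y - x + 1)))) (at \<tau>)"
    unfolding J_def \<theta>_def
    by (rule has_vector_derivative_of_real[OF has_real_derivative_besselJ_sin[OF assms]])
  have "((\<lambda>\<tau>. - \<i> * complex_of_real ((\<gamma> * \<tau> - pi) / 2 * real_of_int x + (\<gamma> * \<tau> + pi) / 2 * real_of_int y))
      has_vector_derivative - \<i> * complex_of_real \<rho>') (at \<tau>)"
    unfolding \<rho>'_def
    by (intro has_vector_derivative_mult_right has_vector_derivative_of_real)
       (auto intro!: derivative_eq_intros simp: field_simps)
  from field_vector_diff_chain_at[OF this DERIV_exp]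
  have dE: "((\<lambda>\<tau>. exp (- \<i> * complex_of_real ((\<gamma> * \<tau> - pi) / 2 * real_of_int x + (\<gamma> * \<tau> + pi) / 2 * real_of_int y)))
      has_vector_derivative - \<i> * complex_of_real \<rho>' * E) (at \<tau>)"
    by (simp add: o_def E_def)
  txt \<open>By the recurrence, the sine parts of the neighbours' phases produce the diagonal term;
    the cosine parts produce the derivative of the Bessel factor.\<close>
  have key: "- \<i> * complex_of_real \<rho>' * J (y - x) + \<alpha> * cos \<theta> * (J (y - x - 1) - J (y - x + 1))
      = - \<i> * (\<alpha> * J (y - x - 1) * (\<i> * cis \<theta>) + \<alpha> * J (y - x + 1) * (- \<i> * cis (- \<theta>))
                + \<gamma> * real_of_int y * J (y - x))"
    using besselJ_sin_recurrence[OF assms, of \<alpha> \<tau> "y - x"]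
    by (simp add: complex_eq_iff cis.sel J_def \<theta>_def \<rho>'_def algebra_simps)
  have K0: "K0 \<alpha> \<gamma> (bessel_propagator \<alpha> \<gamma> \<tau> x) y
      = \<alpha> * (J (y - x - 1) * (\<i> * cis \<theta>) * E) + \<alpha> * (J (y - x + 1) * (- \<i> * cis (- \<theta>)) * E)
        + \<gamma> * real_of_int y * (J (y - x) * E)"
    unfolding K0_def bessel_propagator_neighbours by (simp only: bessel_propagator_def J_def \<theta>_def E_def)
  have deriv_eq: "E * (- \<i> * complex_of_real \<rho>' * J (y - x) + \<alpha> * cos \<theta> * (J (y - x - 1) - J (y - x + 1)))
      = - \<i> * K0 \<alpha> \<gamma> (bessel_propagator \<alpha> \<gamma> \<tau> x) y"
    unfolding key K0 by (simp add: algebra_simps)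
  have "((\<lambda>\<tau>. bessel_propagator \<alpha> \<gamma> \<tau> x y) has_vector_derivative
      E * (- \<i> * complex_of_real \<rho>' * J (y - x) + \<alpha> * cos \<theta> * (J (y - x - 1) - J (y - x + 1)))) (at \<tau>)"
    unfolding bessel_propagator_def
    by (rule has_vector_derivative_eq_rhs[OF has_vector_derivative_mult[OF dJ dE]])
       (simp add: E_def J_def \<theta>_def algebra_simps)
  then show ?thesis unfolding deriv_eq .
qed

lemma bessel_propagator_decay:
  assumes "\<gamma> \<noteq> 0"
  obtains \<beta> :: "nat \<Rightarrow> real"
  where "\<beta> \<longlonglongrightarrow> 0" and "\<And>\<tau> y. cmod (bessel_propagator \<alpha> \<gamma> \<tau> x y) \<le> \<beta> (nat \<bar>y - x\<bar>)"
proof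
  define R where "R = 2 * \<bar>\<alpha>\<bar> / \<bar>\<gamma>\<bar>"
  have "(\<lambda>m. inverse (fact m) * R ^ m * exp (R\<^sup>2)) \<longlonglongrightarrow> 0 * exp (R\<^sup>2)"
    by (intro tendsto_mult_right summable_LIMSEQ_zero summable_exp)
  then show "(\<lambda>m. R ^ m / fact m * exp (R\<^sup>2)) \<longlonglongrightarrow> 0"
    by (simp add: field_simps)
  fix \<tau> y
  define z where "z = 4 * \<alpha> / \<gamma> * sin (\<gamma> * \<tau> / 2)"
  have "\<bar>z\<bar> / 2 = R * \<bar>sin (\<gamma> * \<tau> / 2)\<bar>" by (simp add: z_def R_def abs_mult)
  also have "\<dots> \<le> R" by (rule mult_left_le) (simp_all add: R_def)
  finally have z_le: "\<bar>z\<bar> / 2 \<le> R" .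
  have "cmod (bessel_propagator \<alpha> \<gamma> \<tau> x y) = \<bar>besselJ (y - x) z\<bar>"
    by (simp add: bessel_propagator_def z_def norm_mult)
  also have "\<dots> \<le> (\<bar>z\<bar> / 2) ^ nat \<bar>y - x\<bar> / fact (nat \<bar>y - x\<bar>) * exp ((\<bar>z\<bar> / 2)\<^sup>2)"
    using abs_besselJ_le by (simp add: power_divide)
  also have "\<dots> \<le> R ^ nat \<bar>y - x\<bar> / fact (nat \<bar>y - x\<bar>) * exp (R\<^sup>2)"
    using z_le by (intro mult_mono divide_right_mono power_mono) auto
  finally show "cmod (bessel_propagator \<alpha> \<gamma> \<tau> x y) \<le> R ^ nat \<bar>y - x\<bar> / fact (nat \<bar>y - x\<bar>) * exp (R\<^sup>2)" .
qed


section \<open>Matrix elements of the unitary group\<close>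

lemma norm_le_l2norm:
  assumes "f \<in> ell2Z"
  shows "cmod (f y) \<le> l2norm f"
proof -
  have "(cmod (f y))\<^sup>2 = (\<Sum>\<^sub>\<infinity>n\<in>{y}. (cmod (f n))\<^sup>2)" by simp
  also have "\<dots> \<le> (\<Sum>\<^sub>\<infinity>n. (cmod (f n))\<^sup>2)"
    by (rule infsum_mono_neutral) (use assms in \<open>auto simp: ell2Z_def\<close>)
  finally show ?thesis unfolding l2norm_def by (rule real_le_rsqrt)
qed

lemma ell2Z_linear_combination:
  assumes "f \<in> ell2Z" and "g \<in> ell2Z"
  shows "(\<lambda>n. a * f n + b * g n) \<in> ell2Z"
proof -
  have "(\<lambda>n. 2 * (cmod a)\<^sup>2 * (cmod (f n))\<^sup>2 + 2 * (cmod b)\<^sup>2 * (cmod (g n))\<^sup>2) summable_on UNIV"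
    using assms by (intro summable_on_add summable_on_cmult_right) (auto simp: ell2Z_def)
  moreover have "(cmod (a * f n + b * g n))\<^sup>2 \<le> 2 * (cmod a)\<^sup>2 * (cmod (f n))\<^sup>2 + 2 * (cmod b)\<^sup>2 * (cmod (g n))\<^sup>2"
    for n
  proof -
    define u v where "u = cmod a * cmod (f n)" and "v = cmod b * cmod (g n)"
    have "cmod (a * f n + b * g n) \<le> u + v"
      unfolding u_def v_def by (metis norm_mult norm_triangle_ineq)
    then have "(cmod (a * f n + b * g n))\<^sup>2 \<le> (u + v)\<^sup>2"
      by (intro power_mono) auto
    also have "\<dots> \<le> 2 * u\<^sup>2 + 2 * v\<^sup>2"
      using zero_le_power2[of "u - v"] by (simp add: power2_eq_square algebra_simps)
    finally show ?thesis by (simp add: u_def v_def power_mult_distrib)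
  qed
  ultimately show ?thesis
    unfolding ell2Z_def by (auto intro: summable_on_comparison_test)
qed

lemma ell2Z_finite_support:
  assumes "finite {n. f n \<noteq> 0}"
  shows "f \<in> ell2Z"
proof -
  have "(\<lambda>n. (cmod (f n))\<^sup>2) summable_on {n. f n \<noteq> 0}" using assms by simp
  moreover have "(\<lambda>n. (cmod (f n))\<^sup>2) summable_on {n. f n \<noteq> 0} \<longleftrightarrow> (\<lambda>n. (cmod (f n))\<^sup>2) summable_on UNIV"
    by (rule summable_on_cong_neutral) auto
  ultimately show ?thesis by (simp add: ell2Z_def)
qed

lemma delta_in_ell2Z: "delta n \<in> ell2Z"
  by (auto intro!: ell2Z_finite_support finite_subset[of _ "{n}"] simp: delta_def split: if_splits)

lemma delta_in_domK0: "delta n \<in> domK0"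
  unfolding domK0_def
  by (auto intro!: delta_in_ell2Z ell2Z_finite_support finite_subset[of _ "{n}"] simp: delta_def split: if_splits)

lemma K0_delta_in_ell2Z: "(\<lambda>k. - \<i> * K0 \<alpha> \<gamma> (delta n) k) \<in> ell2Z"
  by (rule ell2Z_finite_support, rule finite_subset[of _ "{n - 1, n, n + 1}"])
     (auto simp: delta_def K0_def)

lemma l2norm_delta: "l2norm (delta n) = 1"
proof -
  have "(\<Sum>\<^sub>\<infinity>k. (cmod (delta n k))\<^sup>2) = (\<Sum>\<^sub>\<infinity>k\<in>{n}. (cmod (delta n k))\<^sup>2)"
    by (rule infsum_cong_neutral) (auto simp: delta_def)
  then show ?thesis by (simp add: l2norm_def delta_def)
qed

lemma has_vector_derivative_of_l2_limit:
  fixes F :: "real \<Rightarrow> seqZ" and G :: seqZ and s :: real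
  defines "Q \<equiv> \<lambda>h. (\<lambda>k. (F (s + h) k - F s k) / complex_of_real h) - G"
  assumes lim: "((\<lambda>h. l2norm (Q h)) \<longlongrightarrow> 0) (at 0)" and Q_ell2: "\<And>h. Q h \<in> ell2Z"
  shows "((\<lambda>s. F s y) has_vector_derivative G y) (at s)"
proof -
  have "norm (F (s + h) y - F s y - h *\<^sub>R G y) / norm h \<le> l2norm (Q h)" if "h \<noteq> 0" for h
  proof -
    have "Q h y = (F (s + h) y - F s y - h *\<^sub>R G y) / complex_of_real h"
      using that by (simp add: Q_def scaleR_conv_of_real field_simps)
    then have "norm (F (s + h) y - F s y - h *\<^sub>R G y) / norm h = cmod (Q h y)"
      by (simp add: norm_divide)
    also have "\<dots> \<le> l2norm (Q h)" by (rule norm_le_l2norm[OF Q_ell2])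
    finally show ?thesis .
  qed
  then have "((\<lambda>h. norm (F (s + h) y - F s y - h *\<^sub>R G y) / norm h) \<longlongrightarrow> 0) (at 0)"
    by (intro tendsto_sandwich[OF _ _ tendsto_const lim]) (auto simp: eventually_at_filter)
  then show ?thesis
    unfolding has_vector_derivative_def has_derivative_at by (auto intro: bounded_linear_scaleR_left)
qed

lemma unitary_group_of_K0D:
  assumes "is_unitary_group_of_K0 \<alpha> \<gamma> U"
  shows unitary_group_ell2Z: "\<And>t f. f \<in> ell2Z \<Longrightarrow> U t f \<in> ell2Z"
    and unitary_group_linear: "\<And>t f g a b. f \<in> ell2Z \<Longrightarrow> g \<in> ell2Z \<Longrightarrow>
          U t (\<lambda>n. a * f n + b * g n) = (\<lambda>n. a * U t f n + b * U t g n)"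
    and unitary_group_l2norm: "\<And>t f. f \<in> ell2Z \<Longrightarrow> l2norm (U t f) = l2norm f"
    and unitary_group_0: "\<And>f. f \<in> ell2Z \<Longrightarrow> U 0 f = f"
    and unitary_group_add: "\<And>s t f. f \<in> ell2Z \<Longrightarrow> U (s + t) f = U s (U t f)"
    and unitary_group_generator: "\<And>f g. f \<in> ell2Z \<Longrightarrow> g \<in> ell2Z \<Longrightarrow>
          ((\<lambda>h. l2norm ((\<lambda>n. (U h f n - f n) / complex_of_real h) - g)) \<longlongrightarrow> 0) (at 0)
          \<longleftrightarrow> f \<in> domK0 \<and> g = (\<lambda>n. - \<i> * K0 \<alpha> \<gamma> f n)"
  using assms unfolding is_unitary_group_of_K0_def by blast+

lemma unitary_group_shifted_quotient:
  assumes H: "is_unitary_group_of_K0 \<alpha> \<gamma> U" and f: "f \<in> ell2Z" and g: "g \<in> ell2Z"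
  shows "U s ((\<lambda>k. (U h f k - f k) / complex_of_real h) - g)
       = (\<lambda>k. (U (s + h) f k - U s f k) / complex_of_real h) - U s g"
proof -
  define P where "P = (\<lambda>k. (1 / complex_of_real h) * U h f k + (- 1 / complex_of_real h) * f k)"
  have Uf: "U h f \<in> ell2Z" using unitary_group_ell2Z[OF H f] .
  have P: "P \<in> ell2Z" unfolding P_def by (rule ell2Z_linear_combination[OF Uf f])
  have UP: "U s P = (\<lambda>k. (1 / complex_of_real h) * U (s + h) f k + (- 1 / complex_of_real h) * U s f k)"
    unfolding P_def unitary_group_linear[OF H Uf f] unitary_group_add[OF H f] ..
  have "(\<lambda>k. (U h f k - f k) / complex_of_real h) - g = (\<lambda>k. 1 * P k + (- 1) * g k)"
    by (simp add: P_def fun_eq_iff diff_divide_distrib)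
  then show ?thesis
    by (simp only: unitary_group_linear[OF H P g] UP) (simp add: fun_eq_iff diff_divide_distrib)
qed

lemma has_vector_derivative_unitary_group:
  assumes H: "is_unitary_group_of_K0 \<alpha> \<gamma> U" and f: "f \<in> domK0"
    and Kf: "(\<lambda>k. - \<i> * K0 \<alpha> \<gamma> f k) \<in> ell2Z"
  shows "((\<lambda>s. U s f y) has_vector_derivative - \<i> * K0 \<alpha> \<gamma> (U s f) y) (at s)"
proof -
  define g where "g = (\<lambda>k. - \<i> * K0 \<alpha> \<gamma> f k)"
  define D where "D = (\<lambda>h. (\<lambda>k. (U h f k - f k) / complex_of_real h) - g)"
  have f_ell2: "f \<in> ell2Z" and g_ell2: "g \<in> ell2Z" using f Kf by (simp_all add: domK0_def g_def)
  have D_ell2: "D h \<in> ell2Z" for h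
  proof -
    have "D h = (\<lambda>k. 1 * (\<lambda>k. (1 / complex_of_real h) * U h f k + (- 1 / complex_of_real h) * f k) k + (- 1) * g k)"
      by (simp add: D_def fun_eq_iff diff_divide_distrib)
    also have "\<dots> \<in> ell2Z"
      by (intro ell2Z_linear_combination unitary_group_ell2Z[OF H] f_ell2 g_ell2)
    finally show ?thesis .
  qed
  define Ds where "Ds = (\<lambda>h. (\<lambda>k. (U (s + h) f k - U s f k) / complex_of_real h) - U s g)"
  have Ds: "Ds h = U s (D h)" for h
    unfolding Ds_def D_def unitary_group_shifted_quotient[OF H f_ell2 g_ell2] ..
  have "((\<lambda>h. l2norm (D h)) \<longlongrightarrow> 0) (at 0)"
    using unitary_group_generator[OF H f_ell2 g_ell2] f by (simp add: D_def g_def)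
  then have lim: "((\<lambda>h. l2norm (Ds h)) \<longlongrightarrow> 0) (at 0)"
    by (simp add: Ds unitary_group_l2norm[OF H D_ell2])
  have "U h (U s f) = U (s + h) f" for h
    using unitary_group_add[OF H f_ell2, of h s] by (simp add: add.commute)
  then have "((\<lambda>h. l2norm ((\<lambda>k. (U h (U s f) k - U s f k) / complex_of_real h) - U s g)) \<longlongrightarrow> 0) (at 0)"
    using lim by (simp only: Ds_def)
  then have "U s g = (\<lambda>k. - \<i> * K0 \<alpha> \<gamma> (U s f) k)"
    using unitary_group_generator[OF H unitary_group_ell2Z[OF H f_ell2] unitary_group_ell2Z[OF H g_ell2]] by simp
  moreover have "Ds h \<in> ell2Z" for h
    unfolding Ds by (rule unitary_group_ell2Z[OF H D_ell2])
  then have "((\<lambda>s. U s f y) has_vector_derivative U s g y) (at s)"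
    by (intro has_vector_derivative_of_l2_limit lim[unfolded Ds_def]) (simp add: Ds_def)
  ultimately show ?thesis by simp
qed


section \<open>Uniqueness of bounded solutions\<close>

lemma norm_diff_le_has_vector_derivative_bound:
  fixes F :: "real \<Rightarrow> 'a::real_normed_vector"
  assumes "\<And>s. (F has_vector_derivative F' s) (at s)" and "\<And>s. norm (F' s) \<le> M"
  shows "norm (F b - F a) \<le> M * \<bar>b - a\<bar>"
proof -
  have "onorm (\<lambda>h. h *\<^sub>R F' s) \<le> M" for s
    by (rule onorm_le) (simp add: assms(2) mult.commute[of M] mult_left_mono)
  then show ?thesis
    using differentiable_bound[of UNIV F "\<lambda>s h. h *\<^sub>R F' s" M b a] assms(1)
    by (simp add: has_vector_derivative_def)
qed

lemma sum_window_if_eq: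
  assumes "\<bar>m - x\<bar> \<le> int N"
  shows "(\<Sum>j<2 * N + 1. if x - int N + int j = m then v else 0) = v"
proof -
  have "(\<Sum>j<2 * N + 1. if x - int N + int j = m then v else 0)
      = (\<Sum>j<2 * N + 1. if j = nat (m - x + int N) then v else 0)"
    by (rule sum.cong) (use assms in auto)
  also have "\<dots> = v"
    using assms by (subst sum.delta) auto
  finally show ?thesis .
qed

text \<open>Discrete current of the pairing \<open>\<Sum>\<^sub>y w y s * c y s\<close>.\<close>
definition lattice_flux :: "(int \<Rightarrow> real \<Rightarrow> complex) \<Rightarrow> (int \<Rightarrow> real \<Rightarrow> complex) \<Rightarrow> real \<Rightarrow> int \<Rightarrow> complex"
  where "lattice_flux w c s y = w (y - 1) s * c y s - w y s * c (y - 1) s"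

lemma has_vector_derivative_product_lattice_flux:
  assumes "\<And>y. (w y has_vector_derivative \<i> * K0 \<alpha> \<gamma> (\<lambda>y. w y s) y) (at s)"
    and "\<And>y. (c y has_vector_derivative - \<i> * K0 \<alpha> \<gamma> (\<lambda>y. c y s) y) (at s)"
  shows "((\<lambda>s. w y s * c y s) has_vector_derivative
           \<i> * \<alpha> * (lattice_flux w c s y - lattice_flux w c s (y + 1))) (at s)"
  by (rule has_vector_derivative_eq_rhs[OF has_vector_derivative_mult[OF assms]])
     (simp add: K0_def lattice_flux_def algebra_simps)

lemma has_vector_derivative_window_sum:
  assumes "\<And>y. (w y has_vector_derivative \<i> * K0 \<alpha> \<gamma> (\<lambda>y. w y s) y) (at s)"
    and "\<And>y. (c y has_vector_derivative - \<i> * K0 \<alpha> \<gamma> (\<lambda>y. c y s) y) (at s)"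
  shows "((\<lambda>s. \<Sum>j<2 * N + 1. w (x - int N + int j) s * c (x - int N + int j) s) has_vector_derivative
           \<i> * \<alpha> * (lattice_flux w c s (x - int N) - lattice_flux w c s (x + int N + 1))) (at s)"
proof -
  let ?F = "\<lambda>j. lattice_flux w c s (x - int N + int j)"
  have "((\<lambda>s. \<Sum>j<2 * N + 1. w (x - int N + int j) s * c (x - int N + int j) s) has_vector_derivative
      (\<Sum>j<2 * N + 1. \<i> * \<alpha> * (?F j - lattice_flux w c s (x - int N + int j + 1)))) (at s)"
    by (intro has_vector_derivative_sum has_vector_derivative_product_lattice_flux[where \<gamma> = \<gamma>] assms)
  moreover have "(\<Sum>j<2 * N + 1. ?F j - lattice_flux w c s (x - int N + int j + 1))
      = lattice_flux w c s (x - int N) - lattice_flux w c s (x + int N + 1)"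
    using sum_lessThan_telescope'[of ?F "2 * N + 1"] by (simp add: ac_simps del: sum.lessThan_Suc)
  ultimately show ?thesis
    by (simp add: sum_distrib_left[symmetric] del: sum.lessThan_Suc)
qed

lemma norm_lattice_flux_le:
  assumes "\<And>y. cmod (c y s) \<le> C" and "\<And>y. cmod (w y s) \<le> b y"
  shows "cmod (lattice_flux w c s y) \<le> C * (b (y - 1) + b y)"
proof -
  have "cmod (lattice_flux w c s y) \<le> cmod (w (y - 1) s) * cmod (c y s) + cmod (w y s) * cmod (c (y - 1) s)"
    unfolding lattice_flux_def by (metis norm_mult norm_triangle_ineq4)
  also have "\<dots> \<le> b (y - 1) * C + b y * C"
    using assms by (intro add_mono mult_mono) (auto intro: order_trans[OF norm_ge_zero])
  finally show ?thesis by (simp add: algebra_simps)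
qed

lemma norm_boundary_current_le:
  assumes "\<And>y. cmod (c y s) \<le> C" and "\<And>y. cmod (w y s) \<le> \<beta> (nat \<bar>y - x\<bar>)"
  shows "norm (\<i> * \<alpha> * (lattice_flux w c s (x - int N) - lattice_flux w c s (x + int N + 1)))
           \<le> 2 * \<bar>\<alpha>\<bar> * C * (\<beta> N + \<beta> (Suc N))"
proof -
  have flux: "cmod (lattice_flux w c s y) \<le> C * (\<beta> (nat \<bar>y - 1 - x\<bar>) + \<beta> (nat \<bar>y - x\<bar>))" for y
    using norm_lattice_flux_le[where c = c and w = w and s = s and b = "\<lambda>y. \<beta> (nat \<bar>y - x\<bar>)", OF assms] by simp
  have "norm (\<i> * \<alpha> * (lattice_flux w c s (x - int N) - lattice_flux w c s (x + int N + 1)))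
      \<le> \<bar>\<alpha>\<bar> * (cmod (lattice_flux w c s (x - int N)) + cmod (lattice_flux w c s (x + int N + 1)))"
    by (simp add: norm_mult norm_triangle_ineq4 mult_left_mono)
  also have "\<dots> \<le> \<bar>\<alpha>\<bar> * (C * (\<beta> (Suc N) + \<beta> N) + C * (\<beta> N + \<beta> (Suc N)))"
    using flux[of "x - int N"] flux[of "x + int N + 1"]
    by (intro mult_left_mono add_mono) (simp_all add: nat_add_distrib)
  finally show ?thesis by (simp add: algebra_simps)
qed

lemma bounded_solution_eq_bessel_propagator:
  assumes \<gamma>: "\<gamma> \<noteq> 0"
    and ode: "\<And>y s. (c y has_vector_derivative - \<i> * K0 \<alpha> \<gamma> (\<lambda>y. c y s) y) (at s)"
    and bounded: "\<And>y s. cmod (c y s) \<le> C"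
    and init: "\<And>y. c y 0 = delta n y"
  shows "c x t = bessel_propagator \<alpha> \<gamma> t x n"
proof -
  obtain \<beta> where \<beta>: "\<beta> \<longlonglongrightarrow> 0"
    and decay: "\<And>\<tau> y. cmod (bessel_propagator \<alpha> \<gamma> \<tau> x y) \<le> \<beta> (nat \<bar>y - x\<bar>)"
    using bessel_propagator_decay[OF \<gamma>] by blast
  define w where "w = (\<lambda>y s. bessel_propagator \<alpha> \<gamma> (t - s) x y)"
  define S where "S = (\<lambda>N s. \<Sum>j<2 * N + 1. w (x - int N + int j) s * c (x - int N + int j) s)"
  define M where "M = (\<lambda>N. 2 * \<bar>\<alpha>\<bar> * C * (\<beta> N + \<beta> (Suc N)))"
  have dw: "(w y has_vector_derivative \<i> * K0 \<alpha> \<gamma> (\<lambda>y. w y s) y) (at s)" for y s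
  proof -
    have "((\<lambda>s. t - s) has_vector_derivative - 1) (at s)" by (auto intro!: derivative_eq_intros)
    from vector_diff_chain_at[OF this has_vector_derivative_bessel_propagator[OF \<gamma>]]
    show ?thesis by (simp add: w_def o_def)
  qed
  have boundary: "norm (\<i> * \<alpha> * (lattice_flux w c s (x - int N) - lattice_flux w c s (x + int N + 1))) \<le> M N"
    for s N
    unfolding M_def by (rule norm_boundary_current_le[OF bounded]) (simp add: w_def decay)
  have "w y t * c y t = (if y = x then c x t else 0)" for y
    by (simp add: w_def bessel_propagator_at_0)
  then have S_t: "S N t = c x t" for N
    unfolding S_def by (simp only:) (rule sum_window_if_eq, simp)
  have "w y 0 * c y 0 = (if y = n then bessel_propagator \<alpha> \<gamma> t x n else 0)" for y
    by (simp add: w_def init delta_def)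
  then have S_0: "S N 0 = bessel_propagator \<alpha> \<gamma> t x n" if "\<bar>n - x\<bar> \<le> int N" for N
    unfolding S_def by (simp only:) (rule sum_window_if_eq[OF that])
  have "\<forall>\<^sub>F N in sequentially. cmod (c x t - bessel_propagator \<alpha> \<gamma> t x n) \<le> M N * \<bar>t\<bar>"
  proof (rule eventually_sequentiallyI[of "nat \<bar>n - x\<bar>"])
    fix N assume "nat \<bar>n - x\<bar> \<le> N"
    have "cmod (S N t - S N 0) \<le> M N * \<bar>t - 0\<bar>"
      unfolding S_def
      by (rule norm_diff_le_has_vector_derivative_bound[OF has_vector_derivative_window_sum[OF dw ode] boundary])
    with S_t S_0 \<open>nat \<bar>n - x\<bar> \<le> N\<close> show "cmod (c x t - bessel_propagator \<alpha> \<gamma> t x n) \<le> M N * \<bar>t\<bar>"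
      by simp
  qed
  moreover have "(\<lambda>N. M N * \<bar>t\<bar>) \<longlonglongrightarrow> 0"
    using tendsto_mult_right[OF tendsto_mult_left[OF tendsto_add[OF \<beta> LIMSEQ_Suc[OF \<beta>]]]]
    by (simp add: M_def)
  ultimately have "cmod (c x t - bessel_propagator \<alpha> \<gamma> t x n) \<le> 0"
    by (intro tendsto_le[OF trivial_limit_sequentially _ tendsto_const]) auto
  then show ?thesis by simp
qed

theorem mainTheorem4:
  fixes \<alpha> \<gamma> t :: real and x n :: int and U :: "real \<Rightarrow> seqZ \<Rightarrow> seqZ"
  assumes "\<gamma> \<noteq> 0"
    and "is_unitary_group_of_K0 \<alpha> \<gamma> U"
  shows "U t (delta n) x =
     complex_of_real (besselJ (n - x) (4 * \<alpha> / \<gamma> * sin (\<gamma> * t / 2)))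
     * exp (- \<i> * complex_of_real ((\<gamma> * t - pi) / 2 * real_of_int x + (\<gamma> * t + pi) / 2 * real_of_int n))"
proof -
  note U = assms(2)
  have "U t (delta n) x = bessel_propagator \<alpha> \<gamma> t x n"
  proof (rule bounded_solution_eq_bessel_propagator[OF assms(1), where c = "\<lambda>y s. U s (delta n) y"])
    show "((\<lambda>s. U s (delta n) y) has_vector_derivative
            - \<i> * K0 \<alpha> \<gamma> (\<lambda>y. U s (delta n) y) y) (at s)" for y s
      using has_vector_derivative_unitary_group[OF U delta_in_domK0 K0_delta_in_ell2Z] by simp
    show "cmod (U s (delta n) y) \<le> 1" for y s
      using norm_le_l2norm[OF unitary_group_ell2Z[OF U delta_in_ell2Z]]
      by (simp add: unitary_group_l2norm[OF U delta_in_ell2Z] l2norm_delta)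
    show "U 0 (delta n) y = delta n y" for y
      by (simp add: unitary_group_0[OF U delta_in_ell2Z])
  qed
  then show ?thesis by (simp add: bessel_propagator_def)
qed

end
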